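(* Let $X$ be a finite rack acting strongly on a set $M$. Let $x\in X$ be of order $k$ in $X$. Then every element $m\cdot(x_i)_{i=1}^r$ (with $m\in M$, $x_1,\ldots,x_r\in X$), where $x$ appears $k$ times in the sequence $x_1,\ldots,x_r$, can be written as $m\cdot(y_j)_{j=1}^{r-k}$ for some $y_1,\ldots,y_{r-k}\in X$.
   Context: A rack is a set $X$ with a binary operation $\rhd$ such that each $x\mapsto x\rhd y$ is bijective and $(x\rhd y)\rhd z=(x\rhd z)\rhd(y\rhd z)$. A stabilizing family of $X$ is a finite family $(u_1,\ldots,u_s)$ with $(\cdots(z\rhd u_1)\cdots)\rhd u_s=z$ for all $z\in X$. The order of $x\in X$ is the least $k\ge1$ such that the constant family $(x,\ldots,x)$ of length $k$ is a stabilizing family. A rack action of $X$ on $M$ is a map $(m,x)\mapsto m\cdot x$ such that each $m\mapsto m\cdot x$ is a bijection, $(m\cdot x)\cdot y=(m\cdot y)\cdot(x\rhd y)$, and for every stabilizing family $(u_1,\ldots,u_s)$ and every cyclic shift $\sigma$ of $\{1,\ldots,s\}$, $m\cdot(u_i)_i=m\cdot(u_{\sigma(i)})_i$, where $m\cdot(x_i)_{i=1}^s:=(\cdots(m\cdot x_1)\cdots)\cdot x_s$. The action is strong if every stabilizing family $(u_1,\ldots,u_s)$ of $X$ satisfies $m\cdot(u_i)_i=m$ for all $m\in M$. *)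

theory Defs
  imports Main
begin

text \<open>A rack on a carrier set X with operation rt (rt x y stands for x \<rhd> y).\<close>
definition rack :: "'x set \<Rightarrow> ('x \<Rightarrow> 'x \<Rightarrow> 'x) \<Rightarrow> bool" where
  "rack X rt \<longleftrightarrow>
     (\<forall>x\<in>X. \<forall>y\<in>X. rt x y \<in> X) \<and>
     (\<forall>y\<in>X. bij_betw (\<lambda>x. rt x y) X X) \<and>
     (\<forall>x\<in>X. \<forall>y\<in>X. \<forall>z\<in>X. rt (rt x y) z = rt (rt x z) (rt y z))"

definition rack_fam :: "('x \<Rightarrow> 'x \<Rightarrow> 'x) \<Rightarrow> 'x \<Rightarrow> 'x list \<Rightarrow> 'x" where
  "rack_fam rt z us = foldl rt z us"

definition stabilizing :: "'x set \<Rightarrow> ('x \<Rightarrow> 'x \<Rightarrow> 'x) \<Rightarrow> 'x list \<Rightarrow> bool" where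
  "stabilizing X rt us \<longleftrightarrow> set us \<subseteq> X \<and> (\<forall>z\<in>X. rack_fam rt z us = z)"

definition rack_order :: "'x set \<Rightarrow> ('x \<Rightarrow> 'x \<Rightarrow> 'x) \<Rightarrow> 'x \<Rightarrow> nat" where
  "rack_order X rt x = (LEAST k. k \<ge> 1 \<and> stabilizing X rt (replicate k x))"

text \<open>m \<cdot> (x_i)_i := (...(m \<cdot> x1)...) \<cdot> xs.\<close>
definition act_fam :: "('m \<Rightarrow> 'x \<Rightarrow> 'm) \<Rightarrow> 'm \<Rightarrow> 'x list \<Rightarrow> 'm" where
  "act_fam act m xs = foldl act m xs"

definition rack_action ::
  "'x set \<Rightarrow> ('x \<Rightarrow> 'x \<Rightarrow> 'x) \<Rightarrow> 'm set \<Rightarrow> ('m \<Rightarrow> 'x \<Rightarrow> 'm) \<Rightarrow> bool" where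
  "rack_action X rt M act \<longleftrightarrow>
     (\<forall>m\<in>M. \<forall>x\<in>X. act m x \<in> M) \<and>
     (\<forall>x\<in>X. bij_betw (\<lambda>m. act m x) M M) \<and>
     (\<forall>m\<in>M. \<forall>x\<in>X. \<forall>y\<in>X. act (act m x) y = act (act m y) (rt x y)) \<and>
     (\<forall>us. stabilizing X rt us \<longrightarrow>
        (\<forall>n. \<forall>m\<in>M. act_fam act m us = act_fam act m (rotate n us)))"

definition strong_rack_action ::
  "'x set \<Rightarrow> ('x \<Rightarrow> 'x \<Rightarrow> 'x) \<Rightarrow> 'm set \<Rightarrow> ('m \<Rightarrow> 'x \<Rightarrow> 'm) \<Rightarrow> bool" where
  "strong_rack_action X rt M act \<longleftrightarrow>
     rack_action X rt M act \<and>
     (\<forall>us. stabilizing X rt us \<longrightarrow> (\<forall>m\<in>M. act_fam act m us = m))"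

end

theory Submission
  imports Defs "HOL-Library.FuncSet"
begin

text \<open>
  Using the compatibility axiom (m \<cdot> y) \<cdot> x = (m \<cdot> x) \<cdot> (y \<rhd> x), every occurrence of x in
  a family can be moved to the front at the price of replacing the elements it passes by
  their images under \<open>_ \<rhd> x\<close>. Collecting all k occurrences this way rewrites
  m \<cdot> (x_i)_i as m \<cdot> (x, \<dots>, x, y_1, \<dots>, y_{r-k}). The constant family of length k is
  stabilizing (in a finite rack, \<open>_ \<rhd> x\<close> is a permutation of X and so has finite order),
  hence acts trivially on M because the action is strong.
\<close>

lemma bij_betw_funpow_periodic:
  assumes "finite A" and "bij_betw f A A"
  obtains n where "n > 0" and "\<forall>z\<in>A. (f ^^ n) z = z"
proof -
  have bij: "bij_betw (f ^^ n) A A" for n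
    using assms(2) by (rule bij_betw_funpow)
  define g where "g n = restrict (f ^^ n) A" for n
  have "g n \<in> A \<rightarrow>\<^sub>E A" for n
    using bij_betw_apply[OF bij] unfolding g_def by simp
  then have "range g \<subseteq> A \<rightarrow>\<^sub>E A"
    by blast
  moreover have "finite (A \<rightarrow>\<^sub>E A)"
    using assms(1) by (simp add: finite_PiE)
  ultimately have "finite (range g)"
    by (rule finite_subset)
  then have "\<not> inj g"
    using finite_imageD infinite_UNIV_nat by blast
  then obtain i j where "i < j" and gij: "g i = g j"
    unfolding inj_def by (metis linorder_neqE_nat)
  have "(f ^^ (j - i)) z = z" if "z \<in> A" for z
  proof (rule inj_onD[OF bij_betw_imp_inj_on[OF bij[of i]]])
    have "(f ^^ i) ((f ^^ (j - i)) z) = (f ^^ j) z"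
      using \<open>i < j\<close> by (metis funpow_add le_add_diff_inverse less_imp_le o_apply)
    also have "\<dots> = (f ^^ i) z"
      using gij that unfolding g_def by (metis restrict_apply')
    finally show "(f ^^ i) ((f ^^ (j - i)) z) = (f ^^ i) z" .
  qed (use bij_betw_apply[OF bij] that in auto)
  with \<open>i < j\<close> show thesis
    by (intro that[of "j - i"]) auto
qed

lemma rack_fam_replicate: "rack_fam rt z (replicate n x) = ((\<lambda>z. rt z x) ^^ n) z"
  unfolding rack_fam_def
  by (induction n arbitrary: z) (auto simp: funpow_Suc_right simp del: funpow.simps)

lemma stabilizing_replicate_rack_order:
  assumes "finite X" and "rack X rt" and "x \<in> X"
  shows "stabilizing X rt (replicate (rack_order X rt x) x)"
proof -
  have "bij_betw (\<lambda>z. rt z x) X X"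
    using assms(2,3) unfolding rack_def by blast
  then obtain n where "n > 0" and "\<forall>z\<in>X. ((\<lambda>z. rt z x) ^^ n) z = z"
    using bij_betw_funpow_periodic assms(1) by blast
  then have "\<exists>k. k \<ge> 1 \<and> stabilizing X rt (replicate k x)"
    using assms(3) by (intro exI[of _ n]) (auto simp: stabilizing_def rack_fam_replicate)
  then show ?thesis
    unfolding rack_order_def by (rule LeastI2_ex) blast
qed

lemma act_fam_append: "act_fam act m (xs @ ys) = act_fam act (act_fam act m xs) ys"
  by (simp add: act_fam_def)

lemma rack_action_act_fam_in:
  assumes "rack_action X rt M act" and "m \<in> M" and "set xs \<subseteq> X"
  shows "act_fam act m xs \<in> M"
  using assms(2,3) unfolding act_fam_def
proof (induction xs arbitrary: m)
  case (Cons y xs)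
  then show ?case
    using assms(1) unfolding rack_action_def by auto
qed simp

lemma rack_action_act_fam_snoc:
  assumes "rack_action X rt M act" and "x \<in> X" and "m \<in> M" and "set ys \<subseteq> X"
  shows "act_fam act m (ys @ [x]) = act_fam act m (x # map (\<lambda>y. rt y x) ys)"
  using assms(3,4)
proof (induction ys arbitrary: m)
  case (Cons y ys)
  have "act m y \<in> M" and swap: "act (act m y) x = act (act m x) (rt y x)"
    using assms(1,2) Cons.prems unfolding rack_action_def by auto
  then have "act_fam act (act m y) (ys @ [x]) = act_fam act (act m y) (x # map (\<lambda>y. rt y x) ys)"
    using Cons by simp
  then show ?case
    using swap by (simp add: act_fam_def)
qed (simp add: act_fam_def)

lemma rack_action_act_fam_gather:
  assumes "rack X rt" and "rack_action X rt M act" and "x \<in> X"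
    and "m \<in> M" and "set xs \<subseteq> X"
  shows "\<exists>ys. set ys \<subseteq> X \<and> length ys = length xs - count_list xs x \<and>
           act_fam act m xs = act_fam act m (replicate (count_list xs x) x @ ys)"
  using assms(5)
proof (induction xs rule: rev_induct)
  case (snoc a zs)
  let ?c = "count_list zs x"
  obtain ys where ys: "set ys \<subseteq> X" "length ys = length zs - ?c"
      "act_fam act m zs = act_fam act m (replicate ?c x @ ys)"
    using snoc by auto
  have "?c \<le> length zs"
    by (induction zs) auto
  show ?case
  proof (cases "a = x")
    case False
    then show ?thesis
      using ys snoc.prems \<open>?c \<le> length zs\<close>
      by (intro exI[of _ "ys @ [a]"]) (auto simp: act_fam_append)
  next
    case True
    let ?m = "act_fam act m (replicate ?c x)"
    have "?m \<in> M"
      using rack_action_act_fam_in[OF assms(2,4)] assms(3) by (simp add: set_replicate_conv_if)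
    have "act_fam act m (zs @ [a]) = act_fam act ?m (ys @ [x])"
      using ys True by (simp add: act_fam_append)
    also have "\<dots> = act_fam act ?m (x # map (\<lambda>y. rt y x) ys)"
      using rack_action_act_fam_snoc[OF assms(2,3) \<open>?m \<in> M\<close> ys(1)] .
    also have "\<dots> = act_fam act m (replicate (Suc ?c) x @ map (\<lambda>y. rt y x) ys)"
      by (simp add: act_fam_def replicate_append_same[symmetric])
    finally show ?thesis
      using True ys \<open>?c \<le> length zs\<close> assms(1,3)
      by (intro exI[of _ "map (\<lambda>y. rt y x) ys"]) (auto simp: rack_def)
  qed
qed simp

lemma strong_rack_action_act_fam_stabilizing_prefix:
  assumes "strong_rack_action X rt M act" and "stabilizing X rt us" and "m \<in> M"
  shows "act_fam act m (us @ ys) = act_fam act m ys"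
  using assms unfolding strong_rack_action_def by (simp add: act_fam_append)

theorem mainTheorem19:
  fixes X :: "'x set" and rt :: "'x \<Rightarrow> 'x \<Rightarrow> 'x"
    and M :: "'m set" and act :: "'m \<Rightarrow> 'x \<Rightarrow> 'm"
  assumes "finite X" and "rack X rt"
    and "strong_rack_action X rt M act"
    and "x \<in> X" and "rack_order X rt x = k"
    and "m \<in> M" and "set xs \<subseteq> X" and "count_list xs x = k"
  shows "\<exists>ys. set ys \<subseteq> X \<and> length ys = length xs - k \<and>
             act_fam act m xs = act_fam act m ys"
proof -
  have "rack_action X rt M act"
    using assms(3) unfolding strong_rack_action_def by simp
  then obtain ys where ys: "set ys \<subseteq> X" "length ys = length xs - k"
      "act_fam act m xs = act_fam act m (replicate k x @ ys)"
    using rack_action_act_fam_gather[OF assms(2) _ assms(4,6,7)] assms(8) by blast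
  have "stabilizing X rt (replicate k x)"
    using stabilizing_replicate_rack_order[OF assms(1,2,4)] assms(5) by simp
  then have "act_fam act m (replicate k x @ ys) = act_fam act m ys"
    using strong_rack_action_act_fam_stabilizing_prefix[OF assms(3) _ assms(6)] by blast
  with ys show ?thesis
    by auto
qed

end
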